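(* Let $n\in\mathbb{N}$, $\alpha\in(0,1)$ and $p\in\left[1,\frac1\alpha\right)$. There exists a constant $c_{n,\alpha,p}>0$, depending only on $n$, $\alpha$ and $p$, such that $$\|\nabla^\alpha\chi_{B_r(x)}\|_{L^p(\mathbb{R}^n;\mathbb{R}^n)}=c_{n,\alpha,p}\,r^{\frac np-\alpha}$$ for all $x\in\mathbb{R}^n$ and $r>0$.
   Context: $B_r(x)$ is the open ball of center $x$ and radius $r$, $\chi_E$ the indicator of $E$. For $\alpha\in(0,1)$, $\mu_{n,\alpha}=2^{\alpha}\pi^{-n/2}\Gamma\left(\frac{n+\alpha+1}{2}\right)/\Gamma\left(\frac{1-\alpha}{2}\right)$ and $\nabla^\alpha\chi_{B_r(x)}(y)=\mu_{n,\alpha}\int_{\mathbb{R}^n}\frac{(z-y)(\chi_{B_r(x)}(z)-\chi_{B_r(x)}(y))}{|z-y|^{n+\alpha+1}}\,dz$ (the fractional gradient of $\chi_{B_r(x)}$, defined for a.e. $y$). *)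

theory Defs
  imports "HOL-Analysis.Analysis"
begin

definition frac_mu :: "nat \<Rightarrow> real \<Rightarrow> real" where
  "frac_mu n \<alpha> = 2 powr \<alpha> * pi powr (- real n / 2) * Gamma ((real n + \<alpha> + 1) / 2)
                   / Gamma ((1 - \<alpha>) / 2)"

text \<open>Fractional gradient of the indicator of a set E at the point y (Lebesgue integral
  in z; defined for a.e. y).\<close>
definition frac_grad_ind :: "real \<Rightarrow> ('a::euclidean_space) set \<Rightarrow> 'a \<Rightarrow> 'a" where
  "frac_grad_ind \<alpha> E y = frac_mu DIM('a) \<alpha> *\<^sub>R
     (\<integral>z. ((indicator E z - indicator E y) / norm (z - y) powr (real DIM('a) + \<alpha> + 1))
              *\<^sub>R (z - y) \<partial>lborel)"

definition Lp_norm :: "real \<Rightarrow> (('a::euclidean_space) \<Rightarrow> 'b::real_normed_vector) \<Rightarrow> ennreal" where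
  "Lp_norm p f = (let I = (\<integral>\<^sup>+ y. ennreal (norm (f y) powr p) \<partial>lborel) in
      if I = \<infinity> then \<infinity> else ennreal (enn2real I powr (1 / p)))"

end

theory Submission
  imports Defs
begin

text \<open>
  The map \<open>z \<mapsto> x + r z\<close> carries the unit ball \<open>B\<close> onto \<open>B\<^sub>r(x)\<close>, and the kernel
  of the fractional gradient is homogeneous of degree \<open>-(n + \<alpha>)\<close>. Hence
  \<open>\<nabla>\<^sup>\<alpha>\<chi>\<^bsub>B\<^sub>r(x)\<^esub>(x + r v) = r\<^sup>-\<^sup>\<alpha> \<nabla>\<^sup>\<alpha>\<chi>\<^bsub>B\<^esub>(v)\<close>, and the \<open>p\<close>-th power of the
  \<open>L\<^sup>p\<close> norm of \<open>\<nabla>\<^sup>\<alpha>\<chi>\<^bsub>B\<^sub>r(x)\<^esub>\<close> is \<open>r\<^sup>n\<^sup>-\<^sup>\<alpha>\<^sup>p\<close> times that of \<open>\<nabla>\<^sup>\<alpha>\<chi>\<^bsub>B\<^esub>\<close>.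
  So \<open>c\<close> is the \<open>L\<^sup>p\<close> norm of \<open>\<nabla>\<^sup>\<alpha>\<chi>\<^bsub>B\<^esub>\<close>, and it remains to show \<open>0 < c < \<infinity>\<close>.

  For \<open>|y| > 1\<close> every \<open>z \<in> B\<close> satisfies \<open>y \<bullet> (z - y) < 0\<close>, so
  \<open>y \<bullet> \<nabla>\<^sup>\<alpha>\<chi>\<^bsub>B\<^esub>(y) < 0\<close> and \<open>c > 0\<close>.
  Only points \<open>z\<close> on the other side of the unit sphere contribute to the integral
  defining \<open>\<nabla>\<^sup>\<alpha>\<chi>\<^bsub>B\<^esub>(y)\<close>; this gives the bound \<open>C ||y| - 1|\<^sup>-\<^sup>\<alpha>\<close> near the sphere
  and \<open>C |y|\<^sup>-\<^sup>n\<^sup>-\<^sup>\<alpha>\<close> far from it. As \<open>\<alpha>p < 1\<close> and \<open>(n + \<alpha>)p > n\<close>, both bounds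
  are \<open>p\<close>-integrable, which is checked by dyadic decompositions.
\<close>

section \<open>Lebesgue measure on Euclidean space\<close>

lemma lborel_integral_euclidean_affine:
  fixes f :: "'a::euclidean_space \<Rightarrow> 'b::{banach, second_countable_topology}"
  assumes [measurable]: "f \<in> borel_measurable borel" and c: "c \<noteq> 0"
  shows "(\<integral>x. f x \<partial>lborel) = \<bar>c\<bar> ^ DIM('a) *\<^sub>R (\<integral>x. f (t + c *\<^sub>R x) \<partial>lborel)"
proof -
  have "(\<integral>x. f x \<partial>lborel) =
      (\<integral>x. f x \<partial>density (distr lborel borel (\<lambda>x. t + c *\<^sub>R x)) (\<lambda>_. \<bar>c\<bar> ^ DIM('a)))"
    using lborel_affine[OF c, of t] by simp
  also have "\<dots> = (\<integral>x. \<bar>c\<bar> ^ DIM('a) *\<^sub>R f (t + c *\<^sub>R x) \<partial>lborel)"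
    by (simp add: integral_density integral_distr)
  finally show ?thesis by simp
qed

lemma nn_integral_euclidean_affine:
  fixes f :: "'a::euclidean_space \<Rightarrow> ennreal"
  assumes [measurable]: "f \<in> borel_measurable borel" and c: "c \<noteq> 0"
  shows "(\<integral>\<^sup>+x. f x \<partial>lborel) = ennreal (\<bar>c\<bar> ^ DIM('a)) * (\<integral>\<^sup>+x. f (t + c *\<^sub>R x) \<partial>lborel)"
  by (subst lborel_affine[OF c, of t]) (simp add: nn_integral_density nn_integral_distr nn_integral_cmult)

lemma lborel_not_AE_notin_ball:
  assumes "0 < r"
  shows "\<not> (AE x in lborel. x \<notin> ball (c::'a::euclidean_space) r)"
proof
  assume "AE x in lborel. x \<notin> ball c r"
  then have "ball c r \<in> null_sets lborel"
    by (subst AE_iff_null_sets) auto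
  moreover have "0 < emeasure lborel (ball c r)"
    using assms by (simp add: emeasure_ball)
  ultimately show False
    by (simp add: null_setsD1)
qed

lemma integral_pos_of_pos_on_ball:
  fixes f :: "'a::euclidean_space \<Rightarrow> real"
  assumes "integrable lborel f" "\<And>x. 0 \<le> f x" "\<And>x. x \<in> ball c r \<Longrightarrow> 0 < f x" "0 < r"
  shows "0 < (\<integral>x. f x \<partial>lborel)"
proof -
  have "(\<integral>x. f x \<partial>lborel) \<noteq> 0"
  proof
    assume "(\<integral>x. f x \<partial>lborel) = 0"
    then have "AE x in lborel. f x = 0"
      using integral_nonneg_eq_0_iff_AE[of lborel f] assms(1,2) by simp
    then have "AE x in lborel. x \<notin> ball c r"
      by eventually_elim (use assms(3) in force)
    then show False
      using lborel_not_AE_notin_ball[OF \<open>0 < r\<close>] by blast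
  qed
  moreover have "0 \<le> (\<integral>x. f x \<partial>lborel)"
    using assms(2) by (intro integral_nonneg_AE) simp
  ultimately show ?thesis
    by simp
qed

lemma nn_integral_pos_of_pos_on_ball:
  fixes f :: "'a::euclidean_space \<Rightarrow> ennreal"
  assumes "f \<in> borel_measurable lborel" "\<And>x. x \<in> ball c r \<Longrightarrow> 0 < f x" "0 < r"
  shows "0 < (\<integral>\<^sup>+x. f x \<partial>lborel)"
proof (rule ccontr)
  assume "\<not> ?thesis"
  then have "AE x in lborel. f x = 0"
    using assms(1) by (simp add: not_gr_zero nn_integral_0_iff_AE)
  then have "AE x in lborel. x \<notin> ball c r"
    by eventually_elim (use assms(2) in force)
  then show False
    using lborel_not_AE_notin_ball[OF \<open>0 < r\<close>] by blast
qed

lemma ex_dyadic_interval: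
  assumes "1 \<le> (x::real)"
  obtains k :: nat where "2 ^ k \<le> x" "x < 2 ^ (k + 1)"
proof -
  have "1 \<le> nat \<lfloor>x\<rfloor>" using assms by linarith
  then obtain k where k: "2 ^ k \<le> nat \<lfloor>x\<rfloor>" "nat \<lfloor>x\<rfloor> < (2::nat) ^ (k + 1)"
    using ex_power_ivl1[of 2] by blast
  show ?thesis
  proof (rule that)
    have "(2::int) ^ k \<le> \<lfloor>x\<rfloor>" using k(1) assms by (simp add: le_nat_iff)
    then show "2 ^ k \<le> x" by (metis le_floor_iff of_int_numeral of_int_power)
    have "\<lfloor>x\<rfloor> < (2::int) ^ (k + 1)" using k(2) assms by (simp add: nat_less_iff)
    then show "x < 2 ^ (k + 1)" by (metis floor_less_iff of_int_numeral of_int_power)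
  qed
qed

lemma power_diff_le:
  fixes a b :: real
  assumes "0 \<le> b" "b \<le> a"
  shows "a ^ n - b ^ n \<le> n * a ^ (n - 1) * (a - b)"
proof (induction n)
  case 0 then show ?case by simp
next
  case (Suc n)
  have "b ^ n \<le> a ^ n" using assms by (intro power_mono) auto
  have "a ^ Suc n - b ^ Suc n = a * (a ^ n - b ^ n) + b ^ n * (a - b)"
    by (simp add: algebra_simps)
  also have "\<dots> \<le> a * (n * a ^ (n - 1) * (a - b)) + a ^ n * (a - b)"
    using Suc assms \<open>b ^ n \<le> a ^ n\<close> by (intro add_mono mult_left_mono mult_right_mono) auto
  also have "\<dots> = Suc n * a ^ (Suc n - 1) * (a - b)"
    by (cases n) (simp_all add: algebra_simps)
  finally show ?case .
qed

lemma nn_integral_norm_powr_tail_le_suminf: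
  fixes d s :: real
  assumes "0 \<le> s" "0 < d"
  shows "(\<integral>\<^sup>+w. indicator {w::'a::euclidean_space. d \<le> norm w} w * ennreal (norm w powr - s) \<partial>lborel)
    \<le> (\<Sum>k. ennreal ((2 ^ k * d) powr - s) * emeasure lborel (ball (0::'a) (2 ^ (k + 1) * d)))"
proof -
  define f where "f k w = ennreal ((2 ^ k * d) powr - s) * indicator (ball (0::'a) (2 ^ (k + 1) * d)) w"
    for k w
  have dyadic_cover: "indicator {w::'a. d \<le> norm w} w * ennreal (norm w powr - s) \<le> (\<Sum>k. f k w)"
    for w
  proof (cases "d \<le> norm w")
    case True
    then obtain k :: nat where k: "2 ^ k \<le> norm w / d" "norm w / d < 2 ^ (k + 1)"
      using assms ex_dyadic_interval[of "norm w / d"] by auto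
    then have "norm w powr - s \<le> (2 ^ k * d) powr - s" "w \<in> ball 0 (2 ^ (k + 1) * d)"
      using assms by (auto simp: field_simps intro!: powr_mono2')
    then have "indicator {w::'a. d \<le> norm w} w * ennreal (norm w powr - s) \<le> f k w"
      using True by (simp add: f_def ennreal_leI)
    also have "\<dots> \<le> (\<Sum>k. f k w)"
      using sum_le_suminf[OF summableI, of "{k}" "\<lambda>k. f k w"] by simp
    finally show ?thesis .
  qed simp
  have f_measurable: "f k \<in> borel_measurable borel" for k
    unfolding f_def by (intro borel_measurable_times_ennreal borel_measurable_indicator) auto
  have "(\<integral>\<^sup>+w. indicator {w::'a. d \<le> norm w} w * ennreal (norm w powr - s) \<partial>lborel)
      \<le> (\<integral>\<^sup>+w. (\<Sum>k. f k w) \<partial>lborel)"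
    by (intro nn_integral_mono dyadic_cover)
  also have "\<dots> = (\<Sum>k. \<integral>\<^sup>+w. f k w \<partial>lborel)"
    by (rule nn_integral_suminf) (simp add: f_measurable)
  finally show ?thesis
    by (simp add: f_def nn_integral_cmult_indicator)
qed

lemma nn_integral_norm_powr_tail_le:
  fixes d s :: real
  assumes "real DIM('a) < s" "0 < d"
  shows "(\<integral>\<^sup>+w. indicator {w::'a::euclidean_space. d \<le> norm w} w * ennreal (norm w powr - s) \<partial>lborel)
    \<le> ennreal (unit_ball_vol DIM('a) * 2 ^ DIM('a) * d powr (DIM('a) - s) / (1 - 2 powr (DIM('a) - s)))"
proof -
  define n where "n = DIM('a)"
  define V where "V = unit_ball_vol n"
  define q where "q = 2 powr (real n - s)"
  have q: "0 \<le> q" "q < 1"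
    using assms by (auto simp: q_def n_def powr_less_one)
  have dyadic_term: "ennreal ((2 ^ k * d) powr - s) * emeasure lborel (ball (0::'a) (2 ^ (k + 1) * d))
      = ennreal (V * 2 ^ n * d powr (n - s) * q ^ k)" for k
  proof -
    have "emeasure lborel (ball (0::'a) (2 ^ (k + 1) * d)) = ennreal (V * (2 ^ (k + 1) * d) ^ n)"
      using assms by (simp add: emeasure_ball V_def n_def)
    then have "ennreal ((2 ^ k * d) powr - s) * emeasure lborel (ball (0::'a) (2 ^ (k + 1) * d))
        = ennreal ((2 ^ k * d) powr - s * (V * (2 ^ (k + 1) * d) ^ n))"
      by (simp add: ennreal_mult')
    also have "(2 ^ k * d) powr - s * (V * (2 ^ (k + 1) * d) ^ n) = V * 2 powr (k * (n - s) + n) * d powr (n - s)"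
      using assms by (simp add: powr_mult powr_powr powr_add[symmetric] algebra_simps powr_diff
          powr_minus_divide flip: powr_realpow)
    also have "\<dots> = V * 2 ^ n * d powr (n - s) * q ^ k"
      by (simp add: q_def powr_add powr_power powr_realpow mult_ac)
    finally show ?thesis .
  qed
  have "(\<integral>\<^sup>+w. indicator {w::'a. d \<le> norm w} w * ennreal (norm w powr - s) \<partial>lborel)
      \<le> (\<Sum>k. ennreal ((2 ^ k * d) powr - s) * emeasure lborel (ball (0::'a) (2 ^ (k + 1) * d)))"
    using assms by (intro nn_integral_norm_powr_tail_le_suminf) auto
  also have "\<dots> = (\<Sum>k. ennreal (V * 2 ^ n * d powr (n - s) * q ^ k))"
    by (simp only: dyadic_term)
  also have "\<dots> = ennreal (V * 2 ^ n * d powr (n - s) / (1 - q))"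
  proof (rule suminf_ennreal_eq)
    show "(\<lambda>k. V * 2 ^ n * d powr (n - s) * q ^ k) sums (V * 2 ^ n * d powr (n - s) / (1 - q))"
      using sums_mult[OF geometric_sums, of q "V * 2 ^ n * d powr (n - s)"] q by simp
  qed (use q in \<open>simp add: V_def\<close>)
  finally show ?thesis
    by (simp add: V_def n_def q_def)
qed

lemma emeasure_unit_sphere_shell_le:
  assumes "0 < e" "e \<le> 1"
  shows "emeasure lborel {y::'a::euclidean_space. \<bar>norm y - 1\<bar> \<le> e}
    \<le> ennreal (unit_ball_vol DIM('a) * DIM('a) * 2 ^ DIM('a) * e)"
proof -
  define n where "n = DIM('a)"
  define V where "V = unit_ball_vol n"
  have "V > 0" by (simp add: V_def)
  have "emeasure lborel {y::'a. \<bar>norm y - 1\<bar> \<le> e} \<le> emeasure lborel (cball (0::'a) (1 + e) - ball 0 (1 - e))"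
    by (intro emeasure_mono) auto
  also have "\<dots> = emeasure lborel (cball (0::'a) (1 + e)) - emeasure lborel (ball (0::'a) (1 - e))"
    using assms emeasure_lborel_ball_finite[of "0::'a" "1 - e"] by (intro emeasure_Diff) auto
  also have "\<dots> = ennreal (V * ((1 + e) ^ n - (1 - e) ^ n))"
    using assms \<open>V > 0\<close> by (simp add: emeasure_ball emeasure_cball V_def n_def ennreal_minus right_diff_distrib)
  also have "\<dots> \<le> ennreal (V * real n * 2 ^ n * e)"
  proof (intro ennreal_leI)
    have "(1 + e) ^ n - (1 - e) ^ n \<le> real n * (1 + e) ^ (n - 1) * (2 * e)"
      using power_diff_le[of "1 - e" "1 + e" n] assms by simp
    also have "\<dots> \<le> real n * 2 ^ (n - 1) * (2 * e)"
    proof -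
      have "(1 + e) ^ (n - 1) \<le> 2 ^ (n - 1)"
        using assms by (intro power_mono) auto
      then have "real n * (1 + e) ^ (n - 1) \<le> real n * 2 ^ (n - 1)"
        by (simp add: mult_left_mono)
      then show ?thesis
        using assms by (simp add: mult_right_mono)
    qed
    also have "\<dots> = real n * 2 ^ n * e"
      by (cases n) simp_all
    finally show "V * ((1 + e) ^ n - (1 - e) ^ n) \<le> V * real n * 2 ^ n * e"
      using \<open>V > 0\<close> by (simp add: mult.assoc)
  qed
  finally show ?thesis
    by (simp add: V_def n_def)
qed

lemma nn_integral_dist_unit_sphere_powr_le_suminf:
  assumes "0 \<le> q"
  shows "(\<integral>\<^sup>+y. indicator (ball (0::'a::euclidean_space) 2) y * ennreal (\<bar>norm y - 1\<bar> powr - q) \<partial>lborel)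
    \<le> (\<Sum>k. ennreal (2 powr ((real k + 1) * q)) * emeasure lborel {y::'a. \<bar>norm y - 1\<bar> \<le> (1 / 2) ^ k})"
proof -
  define A where "A k = {y::'a. \<bar>norm y - 1\<bar> \<le> (1 / 2) ^ k}" for k :: nat
  have A_sets: "A k \<in> sets borel" for k
    unfolding A_def by measurable
  define f where "f k y = ennreal (2 powr ((real k + 1) * q)) * indicator (A k) y" for k y
  have dyadic_cover: "indicator (ball 0 2) y * ennreal (\<bar>norm y - 1\<bar> powr - q) \<le> (\<Sum>k. f k y)"
    for y
  proof (cases "y \<in> ball 0 2 \<and> norm y \<noteq> 1")
    case True
    define t where "t = \<bar>norm y - 1\<bar>"
    have "0 \<le> norm y" "norm y < 2" "norm y \<noteq> 1"
      using True by auto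
    then have "0 < t" "t \<le> 1"
      unfolding t_def by (auto split: abs_split)
    then obtain k :: nat where k: "2 ^ k \<le> 1 / t" "1 / t < 2 ^ (k + 1)"
      using ex_dyadic_interval[of "1 / t"] by auto
    have "y \<in> A k"
      using k \<open>0 < t\<close> by (simp add: A_def t_def[symmetric] field_simps power_one_over)
    have "t powr - q = (1 / t) powr q"
      using \<open>0 < t\<close> by (simp add: powr_minus_divide powr_divide)
    also have "\<dots> \<le> (2 ^ (k + 1)) powr q"
      using k \<open>0 < t\<close> assms by (intro powr_mono2) auto
    also have "\<dots> = 2 powr ((real k + 1) * q)"
      using powr_realpow[of 2 "k + 1", symmetric] by (simp add: powr_powr add.commute)
    finally have "ennreal (t powr - q) \<le> f k y"
      using \<open>y \<in> A k\<close> by (simp add: f_def ennreal_leI add.commute)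
    also have "\<dots> \<le> (\<Sum>k. f k y)"
      using sum_le_suminf[OF summableI, of "{k}" "\<lambda>k. f k y"] by simp
    finally show ?thesis
      using True by (simp add: t_def)
  qed auto \<comment> \<open>on the unit sphere the integrand is \<open>0 powr - q = 0\<close>\<close>
  have f_measurable: "f k \<in> borel_measurable borel" for k
    unfolding f_def by (intro borel_measurable_times_ennreal borel_measurable_indicator) (auto simp: A_sets)
  have "(\<integral>\<^sup>+y. indicator (ball (0::'a) 2) y * ennreal (\<bar>norm y - 1\<bar> powr - q) \<partial>lborel)
      \<le> (\<integral>\<^sup>+y. (\<Sum>k. f k y) \<partial>lborel)"
    by (intro nn_integral_mono dyadic_cover)
  also have "\<dots> = (\<Sum>k. \<integral>\<^sup>+y. f k y \<partial>lborel)"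
    by (rule nn_integral_suminf) (simp add: f_measurable)
  finally show ?thesis
    by (simp add: f_def A_def[symmetric] A_sets nn_integral_cmult_indicator)
qed

lemma nn_integral_dist_unit_sphere_powr_finite:
  assumes "0 \<le> q" "q < 1"
  shows "(\<integral>\<^sup>+y. indicator (ball (0::'a::euclidean_space) 2) y * ennreal (\<bar>norm y - 1\<bar> powr - q) \<partial>lborel) < \<infinity>"
proof -
  define K where "K = unit_ball_vol DIM('a) * DIM('a) * 2 ^ DIM('a)"
  have "(\<integral>\<^sup>+y. indicator (ball (0::'a) 2) y * ennreal (\<bar>norm y - 1\<bar> powr - q) \<partial>lborel)
      \<le> (\<Sum>k. ennreal (2 powr ((real k + 1) * q)) * emeasure lborel {y::'a. \<bar>norm y - 1\<bar> \<le> (1 / 2) ^ k})"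
    using assms(1) by (rule nn_integral_dist_unit_sphere_powr_le_suminf)
  also have "\<dots> \<le> (\<Sum>k. ennreal (K * 2 powr q * (2 powr (q - 1)) ^ k))"
  proof (rule suminf_le)
    fix k
    have "emeasure lborel {y::'a. \<bar>norm y - 1\<bar> \<le> (1 / 2) ^ k} \<le> ennreal (K * (1 / 2) ^ k)"
      unfolding K_def by (rule emeasure_unit_sphere_shell_le) (auto simp: power_le_one)
    then have "ennreal (2 powr ((real k + 1) * q)) * emeasure lborel {y::'a. \<bar>norm y - 1\<bar> \<le> (1 / 2) ^ k}
        \<le> ennreal (2 powr ((real k + 1) * q) * (K * (1 / 2) ^ k))"
      by (subst ennreal_mult') (simp_all add: mult_left_mono)
    also have "2 powr ((real k + 1) * q) * (K * (1 / 2) ^ k) = K * 2 powr q * (2 powr (q - 1)) ^ k"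
      by (simp add: powr_add powr_diff powr_power algebra_simps power_divide)
    finally show "ennreal (2 powr ((real k + 1) * q)) * emeasure lborel {y::'a. \<bar>norm y - 1\<bar> \<le> (1 / 2) ^ k}
        \<le> ennreal (K * 2 powr q * (2 powr (q - 1)) ^ k)" .
  qed simp_all
  also have "\<dots> < \<infinity>"
  proof -
    have "2 powr (q - 1) < 1"
      using assms by (simp add: powr_less_one)
    then have "summable (\<lambda>k. K * 2 powr q * (2 powr (q - 1)) ^ k)"
      by (intro summable_mult summable_geometric) simp
    then show ?thesis
      by (simp add: K_def less_top ennreal_suminf_neq_top)
  qed
  finally show ?thesis .
qed

section \<open>The kernel of the fractional gradient\<close>

lemma frac_mu_pos: "0 < \<alpha> \<Longrightarrow> \<alpha> < 1 \<Longrightarrow> 0 < frac_mu n \<alpha>"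
  unfolding frac_mu_def by (intro divide_pos_pos mult_pos_pos) auto

definition frac_kernel :: "real \<Rightarrow> ('a::euclidean_space) set \<Rightarrow> 'a \<Rightarrow> 'a \<Rightarrow> 'a" where
  "frac_kernel \<alpha> E y z =
     ((indicator E z - indicator E y) / norm (z - y) powr (real DIM('a) + \<alpha> + 1)) *\<^sub>R (z - y)"

lemma frac_grad_ind_eq_integral_kernel:
  "frac_grad_ind \<alpha> E y = frac_mu DIM('a) \<alpha> *\<^sub>R (\<integral>z. frac_kernel \<alpha> E y z \<partial>lborel)"
  for y :: "'a::euclidean_space"
  unfolding frac_grad_ind_def frac_kernel_def by simp

lemma borel_measurable_frac_kernel [measurable]:
  assumes [measurable]: "E \<in> sets borel"
  shows "frac_kernel \<alpha> E y \<in> borel_measurable borel"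
  unfolding frac_kernel_def by measurable

lemma borel_measurable_frac_grad_ind [measurable]:
  fixes E :: "'a::euclidean_space set"
  assumes [measurable]: "E \<in> sets borel"
  shows "frac_grad_ind \<alpha> E \<in> borel_measurable lborel"
proof -
  have "(\<lambda>(y, z). frac_kernel \<alpha> E y z) \<in> borel_measurable (borel \<Otimes>\<^sub>M (borel :: 'a measure))"
    unfolding frac_kernel_def by measurable
  then have "(\<lambda>(y, z). frac_kernel \<alpha> E y z) \<in> borel_measurable (lborel \<Otimes>\<^sub>M (lborel :: 'a measure))"
    by (subst measurable_cong_sets[OF sets_pair_measure_cong[OF sets_lborel sets_lborel] refl])
  then have "(\<lambda>y. \<integral>z. frac_kernel \<alpha> E y z \<partial>lborel) \<in> borel_measurable (lborel :: 'a measure)"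
    by (rule lborel.borel_measurable_lebesgue_integral)
  then show ?thesis
    unfolding frac_grad_ind_eq_integral_kernel[abs_def] by measurable
qed

lemma norm_frac_kernel:
  fixes y z :: "'a::euclidean_space"
  shows "norm (frac_kernel \<alpha> E y z) =
    \<bar>indicator E z - indicator E y\<bar> * norm (z - y) powr - (real DIM('a) + \<alpha>)"
proof (cases "z = y")
  case False
  have "norm (frac_kernel \<alpha> E y z) =
      \<bar>indicator E z - indicator E y\<bar> * (norm (z - y) / norm (z - y) powr (real DIM('a) + \<alpha> + 1))"
    by (simp add: frac_kernel_def abs_mult)
  also have "norm (z - y) / norm (z - y) powr (real DIM('a) + \<alpha> + 1) = norm (z - y) powr - (real DIM('a) + \<alpha>)"
    using False powr_diff[of "norm (z - y)" 1 "real DIM('a) + \<alpha> + 1"] by simp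
  finally show ?thesis .
qed (simp add: frac_kernel_def)

lemma frac_kernel_affine:
  fixes x v w :: "'a::euclidean_space"
  assumes "0 < r"
  shows "frac_kernel \<alpha> E (x + r *\<^sub>R v) (x + r *\<^sub>R w) =
    r powr - (real DIM('a) + \<alpha>) *\<^sub>R frac_kernel \<alpha> ((\<lambda>z. x + r *\<^sub>R z) -` E) v w"
proof -
  define s where "s = real DIM('a) + \<alpha> + 1"
  define a :: real where "a = indicator E (x + r *\<^sub>R w) - indicator E (x + r *\<^sub>R v)"
  have "frac_kernel \<alpha> E (x + r *\<^sub>R v) (x + r *\<^sub>R w) =
      (a / norm (r *\<^sub>R (w - v)) powr s) *\<^sub>R (r *\<^sub>R (w - v))"
    by (simp add: frac_kernel_def a_def s_def algebra_simps)
  also have "\<dots> = (r / r powr s) *\<^sub>R ((a / norm (w - v) powr s) *\<^sub>R (w - v))"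
    using assms by (simp add: powr_mult divide_inverse mult_ac)
  also have "r / r powr s = r powr - (real DIM('a) + \<alpha>)"
    using assms powr_diff[of r 1 s] by (simp add: s_def)
  finally show ?thesis
    by (simp add: frac_kernel_def a_def s_def indicator_vimage)
qed

lemma frac_grad_ind_affine:
  fixes x v :: "'a::euclidean_space"
  assumes [measurable]: "E \<in> sets borel" and "0 < r"
  shows "frac_grad_ind \<alpha> E (x + r *\<^sub>R v) = r powr - \<alpha> *\<^sub>R frac_grad_ind \<alpha> ((\<lambda>z. x + r *\<^sub>R z) -` E) v"
proof -
  have "(\<integral>z. frac_kernel \<alpha> E (x + r *\<^sub>R v) z \<partial>lborel)
      = r ^ DIM('a) *\<^sub>R (\<integral>w. frac_kernel \<alpha> E (x + r *\<^sub>R v) (x + r *\<^sub>R w) \<partial>lborel)"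
    using lborel_integral_euclidean_affine[of "frac_kernel \<alpha> E (x + r *\<^sub>R v)" r x] assms by simp
  also have "\<dots> = (r ^ DIM('a) * r powr - (real DIM('a) + \<alpha>)) *\<^sub>R
      (\<integral>w. frac_kernel \<alpha> ((\<lambda>z. x + r *\<^sub>R z) -` E) v w \<partial>lborel)"
    using assms by (simp add: frac_kernel_affine)
  also have "r ^ DIM('a) * r powr - (real DIM('a) + \<alpha>) = r powr - \<alpha>"
    using assms by (simp add: powr_add [symmetric] flip: powr_realpow)
  finally show ?thesis
    by (simp add: frac_grad_ind_eq_integral_kernel)
qed

lemma nn_integral_norm_frac_grad_ind_powr_affine:
  fixes x :: "'a::euclidean_space"
  assumes [measurable]: "E \<in> sets borel" and "0 < r"
  shows "(\<integral>\<^sup>+y. ennreal (norm (frac_grad_ind \<alpha> E y) powr p) \<partial>lborel) =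
    ennreal (r powr (real DIM('a) - \<alpha> * p)) *
      (\<integral>\<^sup>+v. ennreal (norm (frac_grad_ind \<alpha> ((\<lambda>z. x + r *\<^sub>R z) -` E) v) powr p) \<partial>lborel)"
proof -
  let ?E = "(\<lambda>z. x + r *\<^sub>R z) -` E"
  have [measurable]: "?E \<in> sets borel"
    by (rule measurable_sets_borel[of _ borel]) simp_all
  have "norm (frac_grad_ind \<alpha> E (x + r *\<^sub>R v)) powr p = r powr (- \<alpha> * p) * norm (frac_grad_ind \<alpha> ?E v) powr p"
    for v
    using assms by (simp add: frac_grad_ind_affine powr_mult powr_powr)
  then have "(\<integral>\<^sup>+y. ennreal (norm (frac_grad_ind \<alpha> E y) powr p) \<partial>lborel) =
      ennreal (r ^ DIM('a)) * (\<integral>\<^sup>+v. ennreal (r powr (- \<alpha> * p)) * ennreal (norm (frac_grad_ind \<alpha> ?E v) powr p) \<partial>lborel)"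
    using nn_integral_euclidean_affine[of "\<lambda>y. ennreal (norm (frac_grad_ind \<alpha> E y) powr p)" r x] assms
    by (simp add: ennreal_mult')
  also have "\<dots> = ennreal (r ^ DIM('a) * r powr (- \<alpha> * p)) * (\<integral>\<^sup>+v. ennreal (norm (frac_grad_ind \<alpha> ?E v) powr p) \<partial>lborel)"
    using assms by (simp add: nn_integral_cmult ennreal_mult' mult.assoc)
  also have "r ^ DIM('a) * r powr (- \<alpha> * p) = r powr (real DIM('a) - \<alpha> * p)"
    using assms by (simp add: powr_add [symmetric] flip: powr_realpow)
  finally show ?thesis .
qed

lemma affine_vimage_ball:
  fixes x :: "'a::real_normed_vector"
  assumes "0 < r"
  shows "(\<lambda>z. x + r *\<^sub>R z) -` ball x r = ball 0 1"
  using assms by (auto simp: dist_norm)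

lemma nn_integral_norm_frac_grad_ind_ball_powr:
  fixes x :: "'a::euclidean_space"
  assumes "0 < r"
  shows "(\<integral>\<^sup>+y. ennreal (norm (frac_grad_ind \<alpha> (ball x r) y) powr p) \<partial>lborel) =
    ennreal (r powr (real DIM('a) - \<alpha> * p)) *
      (\<integral>\<^sup>+y. ennreal (norm (frac_grad_ind \<alpha> (ball (0::'a) 1) y) powr p) \<partial>lborel)"
  using nn_integral_norm_frac_grad_ind_powr_affine[where E="ball x r" and r=r and x=x] assms
  by (simp add: affine_vimage_ball)

section \<open>Decay of the fractional gradient of the unit ball\<close>

lemma nn_integral_norm_frac_kernel_le_measure:
  fixes y :: "'a::euclidean_space"
  assumes "0 < \<alpha>" "0 < t" "E \<in> sets borel" "y \<notin> E"
    and separated: "\<And>z. z \<in> E \<Longrightarrow> t \<le> norm (z - y)"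
  shows "(\<integral>\<^sup>+z. ennreal (norm (frac_kernel \<alpha> E y z)) \<partial>lborel)
    \<le> ennreal (t powr - (real DIM('a) + \<alpha>)) * emeasure lborel E"
proof -
  have "ennreal (norm (frac_kernel \<alpha> E y z)) \<le> ennreal (t powr - (real DIM('a) + \<alpha>)) * indicator E z"
    for z
  proof (cases "z \<in> E")
    case True
    then have "norm (z - y) powr - (real DIM('a) + \<alpha>) \<le> t powr - (real DIM('a) + \<alpha>)"
      using assms by (intro powr_mono2') auto
    then show ?thesis
      using True assms by (simp add: norm_frac_kernel ennreal_leI)
  qed (use assms in \<open>simp add: norm_frac_kernel\<close>)
  then have "(\<integral>\<^sup>+z. ennreal (norm (frac_kernel \<alpha> E y z)) \<partial>lborel)
      \<le> (\<integral>\<^sup>+z. ennreal (t powr - (real DIM('a) + \<alpha>)) * indicator E z \<partial>lborel)"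
    by (intro nn_integral_mono)
  also have "\<dots> = ennreal (t powr - (real DIM('a) + \<alpha>)) * emeasure lborel E"
    using assms by (intro nn_integral_cmult_indicator) simp
  finally show ?thesis .
qed

lemma integrable_frac_kernel:
  fixes y :: "'a::euclidean_space"
  assumes "0 < \<alpha>" "0 < t" "E \<in> sets borel" "emeasure lborel E < \<infinity>" "y \<notin> E"
    and separated: "\<And>z. z \<in> E \<Longrightarrow> t \<le> norm (z - y)"
  shows "integrable lborel (frac_kernel \<alpha> E y)"
proof (rule integrableI_bounded)
  show "frac_kernel \<alpha> E y \<in> borel_measurable lborel"
    using assms(3) by simp
  have "(\<integral>\<^sup>+z. ennreal (norm (frac_kernel \<alpha> E y z)) \<partial>lborel)
      \<le> ennreal (t powr - (real DIM('a) + \<alpha>)) * emeasure lborel E"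
    using assms(1,2,3,5) separated by (rule nn_integral_norm_frac_kernel_le_measure)
  also have "\<dots> < \<infinity>"
    using assms(4) by (simp add: ennreal_mult_less_top)
  finally show "(\<integral>\<^sup>+z. ennreal (norm (frac_kernel \<alpha> E y z)) \<partial>lborel) < \<infinity>" .
qed

lemma nn_integral_norm_frac_kernel_le_tail:
  fixes y :: "'a::euclidean_space"
  assumes "0 < \<alpha>" "0 < t"
    and separated: "\<And>z. indicator E z \<noteq> (indicator E y :: real) \<Longrightarrow> t \<le> norm (z - y)"
  shows "(\<integral>\<^sup>+z. ennreal (norm (frac_kernel \<alpha> E y z)) \<partial>lborel)
    \<le> ennreal (unit_ball_vol DIM('a) * 2 ^ DIM('a) / (1 - 2 powr - \<alpha>) * t powr - \<alpha>)"
proof -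
  define h where "h w = indicator {w::'a. t \<le> norm w} w * ennreal (norm w powr - (real DIM('a) + \<alpha>))"
    for w
  have h_measurable: "h \<in> borel_measurable borel"
    unfolding h_def by measurable
  have "ennreal (norm (frac_kernel \<alpha> E y z)) \<le> h (z - y)" for z
  proof (cases "indicator E z = (indicator E y :: real)")
    case False
    moreover have "\<bar>indicator E z - indicator E y\<bar> \<le> (1::real)"
      by (simp add: indicator_def)
    ultimately show ?thesis
      using separated[OF False] by (auto simp: norm_frac_kernel h_def intro!: ennreal_leI mult_left_le_one_le)
  qed (simp add: norm_frac_kernel)
  then have "(\<integral>\<^sup>+z. ennreal (norm (frac_kernel \<alpha> E y z)) \<partial>lborel) \<le> (\<integral>\<^sup>+z. h (z - y) \<partial>lborel)"
    by (intro nn_integral_mono)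
  also have "\<dots> = (\<integral>\<^sup>+w. h w \<partial>lborel)"
    using nn_integral_euclidean_affine[of "\<lambda>z. h (z - y)" 1 y] h_measurable by simp
  also have "\<dots> \<le> ennreal (unit_ball_vol DIM('a) * 2 ^ DIM('a) / (1 - 2 powr - \<alpha>) * t powr - \<alpha>)"
    using nn_integral_norm_powr_tail_le[where 'a='a, of "real DIM('a) + \<alpha>" t] assms by (simp add: h_def)
  finally show ?thesis .
qed

lemma ennreal_norm_frac_grad_ind_le:
  fixes y :: "'a::euclidean_space"
  shows "ennreal (norm (frac_grad_ind \<alpha> E y))
    \<le> ennreal \<bar>frac_mu DIM('a) \<alpha>\<bar> * (\<integral>\<^sup>+z. ennreal (norm (frac_kernel \<alpha> E y z)) \<partial>lborel)"
proof (cases "integrable lborel (frac_kernel \<alpha> E y)")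
  case True
  then show ?thesis
    using integral_norm_bound_ennreal[OF True]
    by (simp add: frac_grad_ind_eq_integral_kernel ennreal_mult mult_left_mono)
qed (simp add: frac_grad_ind_eq_integral_kernel not_integrable_integral_eq)

lemma frac_grad_ind_unit_ball_near_bound:
  assumes "0 < \<alpha>"
  obtains C where "0 \<le> C"
    "\<And>y::'a::euclidean_space. norm y \<noteq> 1 \<Longrightarrow>
      norm (frac_grad_ind \<alpha> (ball 0 1) y) \<le> C * \<bar>norm y - 1\<bar> powr - \<alpha>"
proof
  define K where "K = unit_ball_vol DIM('a) * 2 ^ DIM('a) / (1 - 2 powr - \<alpha>)"
  have "0 \<le> K"
    using assms by (simp add: K_def powr_less_one less_imp_le)
  then show "0 \<le> \<bar>frac_mu DIM('a) \<alpha>\<bar> * K"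
    by simp
  fix y :: 'a
  assume "norm y \<noteq> 1"
  define t where "t = \<bar>norm y - 1\<bar>"
  have "0 < t"
    using \<open>norm y \<noteq> 1\<close> by (simp add: t_def)
  have "t \<le> norm (z - y)" if "indicator (ball 0 1) z \<noteq> (indicator (ball 0 1) y :: real)" for z
    using that norm_triangle_ineq3[of z y]
    by (cases "norm z < 1"; cases "norm y < 1") (auto simp: t_def abs_if)
  then have "(\<integral>\<^sup>+z. ennreal (norm (frac_kernel \<alpha> (ball 0 1) y z)) \<partial>lborel) \<le> ennreal (K * t powr - \<alpha>)"
    unfolding K_def by (rule nn_integral_norm_frac_kernel_le_tail[OF assms \<open>0 < t\<close>])
  then have "ennreal (norm (frac_grad_ind \<alpha> (ball 0 1) y)) \<le> ennreal \<bar>frac_mu DIM('a) \<alpha>\<bar> * ennreal (K * t powr - \<alpha>)"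
    by (rule order_trans[OF ennreal_norm_frac_grad_ind_le mult_left_mono]) simp
  then show "norm (frac_grad_ind \<alpha> (ball 0 1) y) \<le> \<bar>frac_mu DIM('a) \<alpha>\<bar> * K * \<bar>norm y - 1\<bar> powr - \<alpha>"
    using \<open>0 \<le> K\<close> by (simp add: t_def ennreal_mult'[symmetric] mult.assoc)
qed

lemma frac_grad_ind_unit_ball_far_bound:
  assumes "0 < \<alpha>"
  obtains C where "0 \<le> C"
    "\<And>y::'a::euclidean_space. 2 \<le> norm y \<Longrightarrow>
      norm (frac_grad_ind \<alpha> (ball 0 1) y) \<le> C * norm y powr - (real DIM('a) + \<alpha>)"
proof
  define s where "s = real DIM('a) + \<alpha>"
  define K where "K = unit_ball_vol DIM('a) * 2 powr s"
  have "0 \<le> K"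
    by (simp add: K_def)
  then show "0 \<le> \<bar>frac_mu DIM('a) \<alpha>\<bar> * K"
    by simp
  fix y :: 'a
  assume "2 \<le> norm y"
  have "norm y / 2 \<le> norm (z - y)" if "z \<in> ball 0 1" for z
    using that \<open>2 \<le> norm y\<close> norm_triangle_ineq3[of z y] by auto
  then have "(\<integral>\<^sup>+z. ennreal (norm (frac_kernel \<alpha> (ball 0 1) y z)) \<partial>lborel)
      \<le> ennreal ((norm y / 2) powr - s) * emeasure lborel (ball (0::'a) 1)"
    using \<open>2 \<le> norm y\<close> assms unfolding s_def by (intro nn_integral_norm_frac_kernel_le_measure) auto
  also have "(norm y / 2) powr - s = norm y powr - s / 2 powr - s"
    by (rule powr_divide)
  also have "\<dots> = 2 powr s * norm y powr - s"
    by (simp add: powr_minus_divide)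
  also have "emeasure lborel (ball (0::'a) 1) = ennreal (unit_ball_vol DIM('a))"
    by (simp add: emeasure_ball)
  also have "ennreal (2 powr s * norm y powr - s) * ennreal (unit_ball_vol DIM('a)) = ennreal (K * norm y powr - s)"
    by (subst ennreal_mult'[symmetric]) (simp_all add: K_def mult_ac)
  finally have "ennreal (norm (frac_grad_ind \<alpha> (ball 0 1) y))
      \<le> ennreal \<bar>frac_mu DIM('a) \<alpha>\<bar> * ennreal (K * norm y powr - s)"
    by (rule order_trans[OF ennreal_norm_frac_grad_ind_le mult_left_mono]) simp
  then show "norm (frac_grad_ind \<alpha> (ball 0 1) y) \<le> \<bar>frac_mu DIM('a) \<alpha>\<bar> * K * norm y powr - s"
    using \<open>0 \<le> K\<close> by (simp add: ennreal_mult'[symmetric] mult.assoc)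
qed

lemma powr_le_mult_powr:
  fixes x C u a p :: real
  assumes "0 \<le> x" "x \<le> C * u powr - a" "0 \<le> C" "0 \<le> u" "0 \<le> p"
  shows "x powr p \<le> C powr p * u powr - (a * p)"
proof -
  have "x powr p \<le> (C * u powr - a) powr p"
    using assms by (intro powr_mono2) auto
  also have "\<dots> = C powr p * u powr - (a * p)"
    using assms by (simp add: powr_mult powr_powr)
  finally show ?thesis .
qed

lemma frac_grad_ind_unit_ball_powr_bound:
  assumes "0 < \<alpha>" "0 \<le> p"
  obtains C1 C2 :: real where "0 \<le> C1" "0 \<le> C2"
    "\<And>y::'a::euclidean_space. norm y \<noteq> 1 \<Longrightarrow> ennreal (norm (frac_grad_ind \<alpha> (ball 0 1) y) powr p)
      \<le> C1 * (indicator (ball 0 2) y * ennreal (\<bar>norm y - 1\<bar> powr - (\<alpha> * p)))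
        + C2 * (indicator {w. 2 \<le> norm w} y * ennreal (norm y powr - ((real DIM('a) + \<alpha>) * p)))"
proof -
  define n where "n = real DIM('a)"
  define g where "g = frac_grad_ind \<alpha> (ball (0::'a) 1)"
  obtain C1 where C1: "0 \<le> C1" "\<And>y. norm y \<noteq> 1 \<Longrightarrow> norm (g y) \<le> C1 * \<bar>norm y - 1\<bar> powr - \<alpha>"
    using frac_grad_ind_unit_ball_near_bound[OF \<open>0 < \<alpha>\<close>] unfolding g_def by blast
  obtain C2 where C2: "0 \<le> C2" "\<And>y. 2 \<le> norm y \<Longrightarrow> norm (g y) \<le> C2 * norm y powr - (n + \<alpha>)"
    using frac_grad_ind_unit_ball_far_bound[OF \<open>0 < \<alpha>\<close>] unfolding g_def n_def by blast
  have "ennreal (norm (g y) powr p)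
      \<le> C1 powr p * (indicator (ball 0 2) y * ennreal (\<bar>norm y - 1\<bar> powr - (\<alpha> * p)))
        + C2 powr p * (indicator {w. 2 \<le> norm w} y * ennreal (norm y powr - ((n + \<alpha>) * p)))"
    if "norm y \<noteq> 1" for y
  proof (cases "norm y < 2")
    case True
    have "norm (g y) powr p \<le> C1 powr p * \<bar>norm y - 1\<bar> powr - (\<alpha> * p)"
      using that C1 assms by (intro powr_le_mult_powr) auto
    then have "ennreal (norm (g y) powr p)
        \<le> C1 powr p * (indicator (ball 0 2) y * ennreal (\<bar>norm y - 1\<bar> powr - (\<alpha> * p)))"
      using True C1 by (simp add: ennreal_mult'[symmetric] ennreal_leI)
    then show ?thesis
      by (rule order_trans) simp
  next
    case False
    have "norm (g y) powr p \<le> C2 powr p * norm y powr - ((n + \<alpha>) * p)"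
      using False C2 assms by (intro powr_le_mult_powr) auto
    then have "ennreal (norm (g y) powr p)
        \<le> C2 powr p * (indicator {w. 2 \<le> norm w} y * ennreal (norm y powr - ((n + \<alpha>) * p)))"
      using False C2 by (simp add: ennreal_mult'[symmetric] ennreal_leI)
    then show ?thesis
      by (rule order_trans) simp
  qed
  then show ?thesis
    using that[of "C1 powr p" "C2 powr p"] by (simp add: g_def n_def)
qed

lemma nn_integral_norm_frac_grad_ind_unit_ball_finite:
  assumes "0 < \<alpha>" "1 \<le> p" "\<alpha> * p < 1"
  shows "(\<integral>\<^sup>+y. ennreal (norm (frac_grad_ind \<alpha> (ball (0::'a::euclidean_space) 1) y) powr p) \<partial>lborel) < \<infinity>"
proof -
  define n where "n = real DIM('a)"
  define near where "near y = indicator (ball 0 2) y * ennreal (\<bar>norm y - 1\<bar> powr - (\<alpha> * p))" for y :: 'a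
  define far where "far y = indicator {w::'a. 2 \<le> norm w} y * ennreal (norm y powr - ((n + \<alpha>) * p))" for y
  obtain C1 C2 :: real where "0 \<le> C1" "0 \<le> C2" and bound:
    "\<And>y. norm y \<noteq> 1 \<Longrightarrow> ennreal (norm (frac_grad_ind \<alpha> (ball (0::'a) 1) y) powr p) \<le> C1 * near y + C2 * far y"
    using frac_grad_ind_unit_ball_powr_bound[where 'a='a, of \<alpha> p] assms unfolding near_def far_def n_def by auto
  have "sphere (0::'a) 1 \<in> null_sets lborel"
    using negligible_sphere[of "0::'a" 1]
    by (auto simp: null_sets_completion_iff negligible_iff_null_sets negligible_convex_frontier)
  then have "AE y in lborel. y \<notin> sphere (0::'a) 1"
    by (rule AE_not_in)
  then have "(\<integral>\<^sup>+y. ennreal (norm (frac_grad_ind \<alpha> (ball (0::'a) 1) y) powr p) \<partial>lborel)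
      \<le> (\<integral>\<^sup>+y. C1 * near y + C2 * far y \<partial>lborel)"
    by (intro nn_integral_mono_AE) (auto elim!: eventually_mono intro: bound)
  also have "\<dots> = C1 * (\<integral>\<^sup>+y. near y \<partial>lborel) + C2 * (\<integral>\<^sup>+y. far y \<partial>lborel)"
  proof -
    have "near \<in> borel_measurable lborel" "far \<in> borel_measurable lborel"
      unfolding near_def far_def measurable_lborel2
      by (intro borel_measurable_times_ennreal borel_measurable_indicator; simp_all; measurable)+
    then show ?thesis
      by (simp add: nn_integral_add nn_integral_cmult borel_measurable_times_ennreal)
  qed
  also have "\<dots> < \<infinity>"
  proof -
    have "(\<integral>\<^sup>+y. near y \<partial>lborel) < \<infinity>"
      unfolding near_def using assms by (intro nn_integral_dist_unit_sphere_powr_finite) auto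
    moreover have "n + \<alpha> \<le> (n + \<alpha>) * p"
      using assms by (simp add: n_def mult_le_cancel_left1 add_nonneg_pos)
    then have "n < (n + \<alpha>) * p"
      using assms by linarith
    then have "(\<integral>\<^sup>+y. far y \<partial>lborel) < \<infinity>"
      unfolding far_def n_def
      by (intro le_less_trans[OF nn_integral_norm_powr_tail_le]) (simp_all add: n_def)
    ultimately show ?thesis
      by (simp add: ennreal_mult_less_top)
  qed
  finally show ?thesis .
qed

section \<open>Nondegeneracy\<close>

lemma inner_frac_grad_ind_unit_ball_neg:
  fixes y :: "'a::euclidean_space"
  assumes "0 < \<alpha>" "\<alpha> < 1" "1 < norm y"
  shows "y \<bullet> frac_grad_ind \<alpha> (ball 0 1) y < 0"
proof -
  define B :: "'a set" where "B = ball 0 1"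
  define f where "f = frac_kernel \<alpha> B y"
  have separated: "norm y - 1 \<le> norm (z - y)" if "z \<in> B" for z
    using that norm_triangle_ineq3[of z y] by (auto simp: B_def)
  have "integrable lborel f"
    unfolding f_def using assms separated emeasure_lborel_ball_finite[of "0::'a" 1]
    by (intro integrable_frac_kernel[of _ "norm y - 1"]) (auto simp: B_def)
  have neg: "y \<bullet> f z < 0" if "z \<in> B" for z
  proof -
    have "y \<bullet> z \<le> norm y * norm z"
      by (rule norm_cauchy_schwarz)
    also have "\<dots> < norm y * norm y"
      using that assms by (intro mult_strict_left_mono) (auto simp: B_def)
    finally have "y \<bullet> (z - y) < 0"
      by (simp add: inner_diff_right dot_square_norm power2_eq_square)
    moreover have "0 < norm (z - y)"
      using separated[OF that] assms by linarith
    ultimately show ?thesis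
      using that assms by (simp add: f_def frac_kernel_def B_def divide_neg_pos)
  qed
  have "0 < (\<integral>z. - (y \<bullet> f z) \<partial>lborel)"
  proof (rule integral_pos_of_pos_on_ball[where c=0 and r=1])
    show "0 \<le> - (y \<bullet> f z)" for z
      using neg[of z] assms by (cases "z \<in> B") (auto simp: f_def frac_kernel_def B_def)
  qed (use neg \<open>integrable lborel f\<close> in \<open>auto simp: B_def\<close>)
  then have "y \<bullet> (\<integral>z. f z \<partial>lborel) < 0"
    using \<open>integrable lborel f\<close> by simp
  then show ?thesis
    using frac_mu_pos[OF assms(1,2)] by (simp add: frac_grad_ind_eq_integral_kernel f_def B_def mult_pos_neg)
qed

lemma nn_integral_norm_frac_grad_ind_unit_ball_pos:
  assumes "0 < \<alpha>" "\<alpha> < 1"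
  shows "0 < (\<integral>\<^sup>+y. ennreal (norm (frac_grad_ind \<alpha> (ball (0::'a::euclidean_space) 1) y) powr p) \<partial>lborel)"
proof -
  obtain b :: 'a where "b \<in> Basis"
    using nonempty_Basis by blast
  show ?thesis
  proof (rule nn_integral_pos_of_pos_on_ball[where c="3 *\<^sub>R b" and r=1])
    fix y :: 'a
    assume "y \<in> ball (3 *\<^sub>R b) 1"
    then have "1 < norm y"
      using norm_triangle_ineq3[of y "3 *\<^sub>R b"] \<open>b \<in> Basis\<close> by (auto simp: dist_norm norm_minus_commute)
    then have "frac_grad_ind \<alpha> (ball 0 1) y \<noteq> 0"
      using inner_frac_grad_ind_unit_ball_neg[OF assms] by force
    then show "0 < ennreal (norm (frac_grad_ind \<alpha> (ball 0 1) y) powr p)"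
      by simp
  qed simp_all
qed

lemma Lp_norm_eq_ennreal:
  assumes "0 \<le> a" "(\<integral>\<^sup>+y. ennreal (norm (f y) powr p) \<partial>lborel) = ennreal a"
  shows "Lp_norm p f = ennreal (a powr (1 / p))"
  using assms by (simp add: Lp_norm_def)

theorem corollary3p10:
  fixes \<alpha> p :: real
  assumes "0 < \<alpha>" "\<alpha> < 1" "1 \<le> p" "p < 1 / \<alpha>"
  shows "\<exists>c>0. \<forall>(x::'a::euclidean_space) r. r > 0 \<longrightarrow>
           Lp_norm p (frac_grad_ind \<alpha> (ball x r)) =
             ennreal (c * r powr (real DIM('a) / p - \<alpha>))"
proof -
  define I where "I = (\<integral>\<^sup>+y. ennreal (norm (frac_grad_ind \<alpha> (ball (0::'a) 1) y) powr p) \<partial>lborel)"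
  have "\<alpha> * p < 1"
    using assms by (simp add: field_simps)
  then have "I < \<infinity>"
    unfolding I_def using assms by (intro nn_integral_norm_frac_grad_ind_unit_ball_finite) auto
  moreover have "0 < I"
    unfolding I_def using assms by (intro nn_integral_norm_frac_grad_ind_unit_ball_pos)
  ultimately obtain J where "I = ennreal J" "0 < J"
    by (cases I) auto
  show ?thesis
  proof (intro exI conjI allI impI)
    show "0 < J powr (1 / p)"
      using \<open>0 < J\<close> by simp
    fix x :: 'a and r :: real
    assume "0 < r"
    then have "Lp_norm p (frac_grad_ind \<alpha> (ball x r)) = ennreal ((r powr (real DIM('a) - \<alpha> * p) * J) powr (1 / p))"
      using \<open>0 < J\<close> nn_integral_norm_frac_grad_ind_ball_powr[where x=x and r=r]
      by (intro Lp_norm_eq_ennreal) (simp_all add: I_def[symmetric] \<open>I = ennreal J\<close> ennreal_mult)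
    also have "(r powr (real DIM('a) - \<alpha> * p) * J) powr (1 / p) = J powr (1 / p) * r powr (real DIM('a) / p - \<alpha>)"
      using assms \<open>0 < J\<close> \<open>0 < r\<close> by (simp add: powr_mult powr_powr field_simps)
    finally show "Lp_norm p (frac_grad_ind \<alpha> (ball x r)) = ennreal (J powr (1 / p) * r powr (real DIM('a) / p - \<alpha>))" .
  qed
qed

end
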